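(* Let $\mathcal C$ be a finite set of cycles and $m\ge1$. The following are equivalent: (i) $\big|\bigcup_{c\in\mathcal C}\Omega_m(c)\big|=\sum_{c\in\mathcal C}\mathrm{per}(c)$; (ii) the map $v\mapsto\mathrm{lbit}_m(v)$ is injective on $\bigcup_{c\in\mathcal C}\Omega_{m+1}(c)$; (iii) the map $v\mapsto\mathrm{hbit}_m(v)$ is injective on $\bigcup_{c\in\mathcal C}\Omega_{m+1}(c)$.
   Context: A periodic binary sequence $s:\mathbb Z\to\{0,1\}$ of least period $p$ determines the cycle $c=[s(0),\dots,s(p-1)]$ (all shifts of $s$ give the same cycle), with $\mathrm{per}(c)=p$. For such $c$, $\Omega_k(c)=\{(s(i),s((i+1)\bmod p),\dots,s((i+k-1)\bmod p)):0\le i<p\}\subseteq\{0,1\}^k$. For $v=(a_1,\dots,a_{m+1})\in\{0,1\}^{m+1}$, $\mathrm{hbit}_m(v)=(a_1,\dots,a_m)$ and $\mathrm{lbit}_m(v)=(a_2,\dots,a_{m+1})$. *)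

theory Defs
  imports Main
begin

(* Binary sequences s : int => bool (True = 1, False = 0). *)

definition has_period :: "(int \<Rightarrow> bool) \<Rightarrow> nat \<Rightarrow> bool" where
  "has_period s p \<longleftrightarrow> p > 0 \<and> (\<forall>i. s (i + int p) = s i)"

definition is_periodic :: "(int \<Rightarrow> bool) \<Rightarrow> bool" where
  "is_periodic s \<longleftrightarrow> (\<exists>p. has_period s p)"

definition least_period :: "(int \<Rightarrow> bool) \<Rightarrow> nat" where
  "least_period s = (LEAST p. has_period s p)"

definition shift :: "int \<Rightarrow> (int \<Rightarrow> bool) \<Rightarrow> (int \<Rightarrow> bool)" where
  "shift k s = (\<lambda>i. s (i + k))"

definition cycle_of :: "(int \<Rightarrow> bool) \<Rightarrow> (int \<Rightarrow> bool) set" where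
  "cycle_of s = range (\<lambda>k. shift k s)"

definition is_cycle :: "(int \<Rightarrow> bool) set \<Rightarrow> bool" where
  "is_cycle c \<longleftrightarrow> (\<exists>s. is_periodic s \<and> c = cycle_of s)"

definition rep :: "(int \<Rightarrow> bool) set \<Rightarrow> (int \<Rightarrow> bool)" where
  "rep c = (SOME s. s \<in> c)"

definition per :: "(int \<Rightarrow> bool) set \<Rightarrow> nat" where
  "per c = least_period (rep c)"

definition Omega :: "nat \<Rightarrow> (int \<Rightarrow> bool) set \<Rightarrow> bool list set" where
  "Omega k c = (let s = rep c; p = per c in
     {map (\<lambda>j. s ((int i + int j) mod int p)) [0..<k] | i. i < p})"

definition hbit :: "nat \<Rightarrow> bool list \<Rightarrow> bool list" where
  "hbit m v = take m v"

definition lbit :: "nat \<Rightarrow> bool list \<Rightarrow> bool list" where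
  "lbit m v = take m (drop 1 v)"

end

theory Submission
  imports Defs
begin

text \<open>Index the windows of a cycle by its occurrences, the pairs (c, i) with i < per c. Then (i)
  says exactly that distinct occurrences carry distinct m-windows. If they do, the (m+1)-window
  at (c, i) is recovered from its lbit (the m-window at (c, i+1)) and from its hbit (the m-window
  at (c, i)). Conversely, if lbit is injective on (m+1)-windows, two equal m-windows extend
  uniquely to the left, so the two sequences agree on a left ray up to a shift; by periodicity
  they agree everywhere up to that shift, so the cycles coincide and the shift is a multiple
  of the least period. The hbit case is symmetric, extending to the right.\<close>

lemma has_period_add_mult:
  assumes "has_period s p"
  shows "s (x + int p * t) = s x"
proof -
  have nat_case: "s (y + int p * int n) = s y" for y n
  proof (induction n arbitrary: y)
    case (Suc n)
    have "s (y + int p * int (Suc n)) = s ((y + int p * int n) + int p)"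
      by (simp add: algebra_simps)
    also have "\<dots> = s y"
      using assms Suc.IH by (simp add: has_period_def)
    finally show ?case .
  qed simp
  show ?thesis
  proof (cases "t \<ge> 0")
    case True
    then show ?thesis using nat_case[of x "nat t"] by simp
  next
    case False
    then have "(x + int p * t) + int p * int (nat (- t)) = x"
      by (simp add: algebra_simps)
    then show ?thesis
      by (metis nat_case)
  qed
qed

lemma has_period_mod:
  assumes "has_period s p"
  shows "s (x mod int p) = s x"
  using has_period_add_mult[OF assms, of x "- (x div int p)"]
  by (simp add: minus_div_mult_eq_mod[symmetric] algebra_simps)

lemma has_period_mult:
  assumes "has_period s p" and "q > 0"
  shows "has_period s (p * q)"
proof -
  have "s (i + int (p * q)) = s i" for i
    using has_period_add_mult[OF assms(1), of i "int q"] by simp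
  then show ?thesis
    using assms by (simp add: has_period_def)
qed

lemma has_period_reflect:
  assumes "has_period s p"
  shows "has_period (\<lambda>x. s (- x)) p"
proof -
  have "s (- (i + int p)) = s (- i)" for i
    using has_period_add_mult[OF assms, of "- (i + int p)" 1] by simp
  then show ?thesis
    using assms by (simp add: has_period_def)
qed

lemma least_period_dvd:
  assumes least: "has_period s (least_period s)" and shift_inv: "\<forall>x. s (x + d) = s x"
  shows "int (least_period s) dvd d"
proof (rule ccontr)
  assume "\<not> int (least_period s) dvd d"
  moreover define q where "q = least_period s"
  moreover define r where "r = d mod int q"
  moreover have "q > 0"
    using least by (simp add: has_period_def q_def)
  ultimately have r: "0 < r" "r < int q"
    by (auto simp: dvd_eq_mod_eq_0 order_le_neq_trans)
  have "s (x + r) = s x" for x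
  proof -
    have "x + r = (x + d) + int q * (- (d div int q))"
      by (simp add: r_def minus_div_mult_eq_mod[symmetric] algebra_simps)
    then have "s (x + r) = s (x + d)"
      by (metis has_period_add_mult[OF least] q_def)
    then show ?thesis
      using shift_inv by simp
  qed
  then have "has_period s (nat r)"
    using r by (simp add: has_period_def)
  then have "q \<le> nat r"
    unfolding q_def least_period_def by (rule Least_le)
  then show False using r by simp
qed

text \<open>Every point is moved into the ray by a multiple of the common period p1 * p2.\<close>

lemma has_period_eq_shift_if_eq_on_ray:
  assumes "has_period s1 p1" and "has_period s2 p2"
    and agree: "\<And>n::nat. s1 (i + int n) = s2 (j + int n)"
  shows "s1 x = s2 (x + (j - i))"
proof -
  define P where "P = p1 * p2"
  have "p1 > 0" "p2 > 0"
    using assms(1,2) by (simp_all add: has_period_def)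
  then have "has_period s1 P" "has_period s2 P"
    using has_period_mult[OF assms(1), of p2] has_period_mult[OF assms(2), of p1]
    by (simp_all add: P_def mult.commute)
  moreover have "P > 0"
    using \<open>has_period s1 P\<close> by (simp add: has_period_def)
  moreover define t where "t = \<bar>x - i\<bar>"
  ultimately have ray: "x - i + int P * t \<ge> 0"
    by (smt (verit) mult_le_cancel_right1 of_nat_0_less_iff)
  have "s1 x = s1 (i + int (nat (x - i + int P * t)))"
    using has_period_add_mult[OF \<open>has_period s1 P\<close>, of x t] ray by simp
  also have "\<dots> = s2 (j + int (nat (x - i + int P * t)))"
    by (rule agree)
  also have "\<dots> = s2 (x + (j - i))"
    using has_period_add_mult[OF \<open>has_period s2 P\<close>, of "x + (j - i)" t] ray by (simp add: algebra_simps)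
  finally show ?thesis .
qed

lemma has_period_eq_shift_if_eq_on_left_ray:
  assumes "has_period s1 p1" and "has_period s2 p2"
    and agree: "\<And>n::nat. s1 (i - int n) = s2 (j - int n)"
  shows "s1 x = s2 (x + (j - i))"
  using has_period_eq_shift_if_eq_on_ray[OF has_period_reflect[OF assms(1)]
      has_period_reflect[OF assms(2)], of "- i" "- j" "- x"] agree
  by (simp add: algebra_simps)

definition window :: "nat \<Rightarrow> (int \<Rightarrow> bool) \<Rightarrow> int \<Rightarrow> bool list" where
  "window k s i = map (\<lambda>j. s (i + int j)) [0..<k]"

lemma window_mod:
  assumes "has_period s p"
  shows "window k s (x mod int p) = window k s x"
proof -
  have "s (x mod int p + int j) = s (x + int j)" for j
    using has_period_mod[OF assms, of "x mod int p + int j"] has_period_mod[OF assms, of "x + int j"]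
    by (simp add: mod_add_left_eq)
  then show ?thesis by (simp add: window_def)
qed

lemma lbit_window: "lbit m (window (Suc m) s i) = window m s (i + 1)"
  by (rule nth_equalityI) (auto simp: lbit_def window_def algebra_simps simp del: upt_Suc)

lemma hbit_window: "hbit m (window (Suc m) s i) = window m s i"
  by (rule nth_equalityI) (auto simp: hbit_def window_def)

lemma window_nth_0: "m \<ge> 1 \<Longrightarrow> window m s i ! 0 = s i"
  by (simp add: window_def)

lemma shift_shift: "shift a (shift k s) = shift (a + k) s"
  by (simp add: shift_def algebra_simps)

lemma cycle_of_shift: "cycle_of (shift k s) = cycle_of s"
proof
  show "cycle_of (shift k s) \<subseteq> cycle_of s"
    unfolding cycle_of_def by (auto simp: shift_shift)
  have "shift a s = shift (a - k) (shift k s)" for a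
    by (simp add: shift_shift)
  then show "cycle_of s \<subseteq> cycle_of (shift k s)"
    unfolding cycle_of_def by blast
qed

lemma is_cycle_rep:
  assumes "is_cycle c"
  shows "has_period (rep c) (per c)" and "c = cycle_of (rep c)"
proof -
  obtain s p where period: "has_period s p" and c: "c = cycle_of s"
    using assms by (auto simp: is_cycle_def is_periodic_def)
  have "s \<in> c"
    using c rangeI[of "\<lambda>k. shift k s" 0] by (simp add: cycle_of_def shift_def)
  then have "rep c \<in> c"
    unfolding rep_def by (rule someI[of "\<lambda>s. s \<in> c"])
  then obtain k where k: "rep c = shift k s"
    by (auto simp: c cycle_of_def)
  have "s ((i + int p) + k) = s (i + k)" for i
    using period unfolding has_period_def by (metis add.commute add.left_commute)
  then have "has_period (rep c) p"
    using period by (simp add: k has_period_def shift_def)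
  then have "has_period (rep c) (least_period (rep c))"
    unfolding least_period_def by (rule LeastI)
  then show "has_period (rep c) (per c)"
    by (simp add: per_def)
  show "c = cycle_of (rep c)"
    using k c cycle_of_shift by simp
qed

lemma per_pos: "is_cycle c \<Longrightarrow> per c > 0"
  using is_cycle_rep(1) by (simp add: has_period_def)

lemma Omega_eq_image:
  assumes "is_cycle c"
  shows "Omega k c = (\<lambda>i. window k (rep c) (int i)) ` {..<per c}"
proof -
  have "map (\<lambda>j. rep c ((int i + int j) mod int (per c))) [0..<k] = window k (rep c) (int i)" for i
    unfolding window_def using has_period_mod[OF is_cycle_rep(1)[OF assms]] by simp
  then have "Omega k c = {window k (rep c) (int i) | i. i < per c}"
    unfolding Omega_def Let_def by simp
  then show ?thesis
    by blast
qed

lemma window_in_Omega: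
  assumes "is_cycle c"
  shows "window k (rep c) x \<in> Omega k c"
proof -
  define i where "i = nat (x mod int (per c))"
  have "window k (rep c) x = window k (rep c) (int i)"
    using window_mod[OF is_cycle_rep(1)[OF assms]] per_pos[OF assms] by (simp add: i_def)
  moreover have "i < per c"
    using per_pos[OF assms] by (simp add: i_def nat_less_iff)
  ultimately show ?thesis
    using Omega_eq_image[OF assms] by simp
qed

text \<open>The shift j - i is then a period of rep c1, hence a multiple of per c1.\<close>

lemma occurrence_eq_if_rep_eq_shift:
  assumes "is_cycle c1" "is_cycle c2" "i < per c1" "j < per c2"
    and eq: "\<forall>x. rep c1 x = rep c2 (x + (int j - int i))"
  shows "c1 = c2" and "i = j"
proof -
  have "rep c1 = shift (int j - int i) (rep c2)"
    using eq by (auto simp: shift_def)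
  then show "c1 = c2"
    using is_cycle_rep(2)[OF assms(1)] is_cycle_rep(2)[OF assms(2)] cycle_of_shift by metis
  then have "int (per c1) dvd int j - int i"
    using least_period_dvd[of "rep c1"] is_cycle_rep(1)[OF assms(1)] eq by (simp add: per_def)
  then show "i = j"
    using assms(3,4) \<open>c1 = c2\<close> dvd_imp_le_int[of "int j - int i" "int (per c2)"] by fastforce
qed

definition occurrences :: "(int \<Rightarrow> bool) set set \<Rightarrow> ((int \<Rightarrow> bool) set \<times> nat) set" where
  "occurrences C = Sigma C (\<lambda>c. {..<per c})"

definition occ_window :: "nat \<Rightarrow> (int \<Rightarrow> bool) set \<times> nat \<Rightarrow> bool list" where
  "occ_window k = (\<lambda>(c, i). window k (rep c) (int i))"

lemma Union_Omega_eq_image: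
  assumes "\<forall>c\<in>C. is_cycle c"
  shows "(\<Union>c\<in>C. Omega k c) = occ_window k ` occurrences C"
  using assms Omega_eq_image by (auto simp: occurrences_def occ_window_def)

lemma card_Union_Omega_eq_sum_per_iff:
  assumes "finite C" and "\<forall>c\<in>C. is_cycle c"
  shows "card (\<Union>c\<in>C. Omega k c) = (\<Sum>c\<in>C. per c) \<longleftrightarrow> inj_on (occ_window k) (occurrences C)"
proof -
  have "card (occurrences C) = (\<Sum>c\<in>C. per c)"
    using assms(1) by (simp add: occurrences_def)
  moreover have "finite (occurrences C)"
    using assms(1) by (simp add: occurrences_def)
  ultimately show ?thesis
    using Union_Omega_eq_image[OF assms(2)] inj_on_iff_eq_card by metis
qed

lemma inj_on_lbit_if_inj_on_occ_window:
  assumes cycles: "\<forall>c\<in>C. is_cycle c" and inj: "inj_on (occ_window m) (occurrences C)"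
  shows "inj_on (lbit m) (\<Union>c\<in>C. Omega (Suc m) c)"
proof (rule inj_onI)
  fix u v
  assume "u \<in> (\<Union>c\<in>C. Omega (Suc m) c)" "v \<in> (\<Union>c\<in>C. Omega (Suc m) c)"
    and lbit_eq: "lbit m u = lbit m v"
  then obtain c1 i c2 j where occs: "c1 \<in> C" "i < per c1" "c2 \<in> C" "j < per c2"
    and u: "u = window (Suc m) (rep c1) (int i)" and v: "v = window (Suc m) (rep c2) (int j)"
    unfolding Union_Omega_eq_image[OF cycles] by (auto simp: occ_window_def occurrences_def)
  have next_occ: "(c, Suc k mod per c) \<in> occurrences C"
    and lbit_occ: "lbit m (window (Suc m) (rep c) (int k)) = occ_window m (c, Suc k mod per c)"
    if "c \<in> C" for c k
  proof -
    show "(c, Suc k mod per c) \<in> occurrences C"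
      using that cycles per_pos by (simp add: occurrences_def)
    show "lbit m (window (Suc m) (rep c) (int k)) = occ_window m (c, Suc k mod per c)"
      using window_mod[OF is_cycle_rep(1), of c m "int (Suc k)"] cycles that
      by (simp add: lbit_window occ_window_def of_nat_mod add.commute)
  qed
  have "occ_window m (c1, Suc i mod per c1) = occ_window m (c2, Suc j mod per c2)"
    using lbit_eq lbit_occ occs by (simp add: u v)
  then have "(c1, Suc i mod per c1) = (c2, Suc j mod per c2)"
    using inj_onD[OF inj] next_occ occs by blast
  moreover have "Suc k mod per c = (if Suc k = per c then 0 else Suc k)" if "k < per c" for k c
    using that by auto
  ultimately have "c1 = c2" "i = j"
    using occs by (auto split: if_splits)
  then show "u = v"
    by (simp add: u v)
qed

lemma inj_on_hbit_if_inj_on_occ_window: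
  assumes cycles: "\<forall>c\<in>C. is_cycle c" and inj: "inj_on (occ_window m) (occurrences C)"
  shows "inj_on (hbit m) (\<Union>c\<in>C. Omega (Suc m) c)"
proof (rule inj_onI)
  fix u v
  assume "u \<in> (\<Union>c\<in>C. Omega (Suc m) c)" "v \<in> (\<Union>c\<in>C. Omega (Suc m) c)"
    and hbit_eq: "hbit m u = hbit m v"
  then obtain a b where "a \<in> occurrences C" "b \<in> occurrences C"
    and "u = occ_window (Suc m) a" "v = occ_window (Suc m) b"
    unfolding Union_Omega_eq_image[OF cycles] by blast
  moreover have "hbit m (occ_window (Suc m) x) = occ_window m x" for x
    by (simp add: occ_window_def hbit_window split: prod.split)
  ultimately show "u = v"
    using hbit_eq inj_onD[OF inj] by metis
qed

lemma inj_on_occ_window_if_inj_on_lbit: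
  assumes cycles: "\<forall>c\<in>C. is_cycle c" and "m \<ge> 1"
    and inj: "inj_on (lbit m) (\<Union>c\<in>C. Omega (Suc m) c)"
  shows "inj_on (occ_window m) (occurrences C)"
proof (rule inj_onI)
  fix a b
  assume "a \<in> occurrences C" "b \<in> occurrences C" and eq: "occ_window m a = occ_window m b"
  then obtain c1 i c2 j where a: "a = (c1, i)" and b: "b = (c2, j)"
    and occs: "c1 \<in> C" "i < per c1" "c2 \<in> C" "j < per c2"
    by (auto simp: occurrences_def)
  have left: "window m (rep c1) (int i - int n) = window m (rep c2) (int j - int n)" for n
  proof (induction n)
    case 0
    then show ?case using eq by (simp add: a b occ_window_def)
  next
    case (Suc n)
    let ?u = "window (Suc m) (rep c1) (int i - int (Suc n))"
    let ?v = "window (Suc m) (rep c2) (int j - int (Suc n))"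
    have "lbit m ?u = lbit m ?v"
      using Suc.IH by (simp add: lbit_window)
    moreover have "?u \<in> (\<Union>c\<in>C. Omega (Suc m) c)" "?v \<in> (\<Union>c\<in>C. Omega (Suc m) c)"
      using occs cycles window_in_Omega by blast+
    ultimately have "?u = ?v"
      using inj_onD[OF inj] by blast
    then show ?case
      by (metis hbit_window)
  qed
  have "rep c1 (int i - int n) = rep c2 (int j - int n)" for n
    using arg_cong[OF left[of n], of "\<lambda>w. w ! 0"] by (simp add: window_nth_0[OF \<open>m \<ge> 1\<close>])
  then have "rep c1 x = rep c2 (x + (int j - int i))" for x
    using has_period_eq_shift_if_eq_on_left_ray[OF is_cycle_rep(1) is_cycle_rep(1)] cycles occs by blast
  then show "a = b"
    using occurrence_eq_if_rep_eq_shift[of c1 c2 i j] cycles occs a b by blast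
qed

lemma inj_on_occ_window_if_inj_on_hbit:
  assumes cycles: "\<forall>c\<in>C. is_cycle c" and "m \<ge> 1"
    and inj: "inj_on (hbit m) (\<Union>c\<in>C. Omega (Suc m) c)"
  shows "inj_on (occ_window m) (occurrences C)"
proof (rule inj_onI)
  fix a b
  assume "a \<in> occurrences C" "b \<in> occurrences C" and eq: "occ_window m a = occ_window m b"
  then obtain c1 i c2 j where a: "a = (c1, i)" and b: "b = (c2, j)"
    and occs: "c1 \<in> C" "i < per c1" "c2 \<in> C" "j < per c2"
    by (auto simp: occurrences_def)
  have right: "window m (rep c1) (int i + int n) = window m (rep c2) (int j + int n)" for n
  proof (induction n)
    case 0
    then show ?case using eq by (simp add: a b occ_window_def)
  next
    case (Suc n)
    let ?u = "window (Suc m) (rep c1) (int i + int n)"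
    let ?v = "window (Suc m) (rep c2) (int j + int n)"
    have "hbit m ?u = hbit m ?v"
      using Suc.IH by (simp add: hbit_window)
    moreover have "?u \<in> (\<Union>c\<in>C. Omega (Suc m) c)" "?v \<in> (\<Union>c\<in>C. Omega (Suc m) c)"
      using occs cycles window_in_Omega by blast+
    ultimately have "?u = ?v"
      using inj_onD[OF inj] by blast
    then have "lbit m ?u = lbit m ?v"
      by simp
    then show ?case
      by (simp add: lbit_window ac_simps)
  qed
  have "rep c1 (int i + int n) = rep c2 (int j + int n)" for n
    using arg_cong[OF right[of n], of "\<lambda>w. w ! 0"] by (simp add: window_nth_0[OF \<open>m \<ge> 1\<close>])
  then have "rep c1 x = rep c2 (x + (int j - int i))" for x
    using has_period_eq_shift_if_eq_on_ray[OF is_cycle_rep(1) is_cycle_rep(1)] cycles occs by blast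
  then show "a = b"
    using occurrence_eq_if_rep_eq_shift[of c1 c2 i j] cycles occs a b by blast
qed

theorem lemma5:
  fixes C :: "(int \<Rightarrow> bool) set set" and m :: nat
  assumes "finite C"
    and "\<forall>c\<in>C. is_cycle c"
    and "m \<ge> 1"
  shows "(card (\<Union>c\<in>C. Omega m c) = (\<Sum>c\<in>C. per c)
            \<longleftrightarrow> inj_on (lbit m) (\<Union>c\<in>C. Omega (Suc m) c))
       \<and> (inj_on (lbit m) (\<Union>c\<in>C. Omega (Suc m) c)
            \<longleftrightarrow> inj_on (hbit m) (\<Union>c\<in>C. Omega (Suc m) c))"
  using card_Union_Omega_eq_sum_per_iff[OF assms(1,2)]
    inj_on_lbit_if_inj_on_occ_window[OF assms(2)] inj_on_hbit_if_inj_on_occ_window[OF assms(2)]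
    inj_on_occ_window_if_inj_on_lbit[OF assms(2,3)] inj_on_occ_window_if_inj_on_hbit[OF assms(2,3)]
  by blast

end
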